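(* Let $\mathrm m\in\mathbb Z^d$ be primitive (components setwise coprime), and let $n=n(\mathrm m)$ be the length of the shortest cycle with index $\mathrm m$ in the fundamental graph $\mathcal G_*$ (assume such a cycle exists). Then $$\mathcal I^{\mathrm m}_{n+1}(Q)=\sum_{\mathbf c\in\mathcal P_n^{\mathrm m}}h_1(q_1,\dots,q_n),$$ $$\mathcal I^{\mathrm m}_{n+2}(Q)=\sum_{\mathbf c\in\mathcal P_n^{\mathrm m}}h_2(q_1,\dots,q_n)+\sum_{\mathbf c\in\mathcal P_{n+1}^{\mathrm m}}h_1(q_1,\dots,q_{n+1}),$$ where in each sum $\mathbf c=[\mathbf e_1,\dots,\mathbf e_\ell]$ runs over distinct prime cycles (as edge sequences), $\mathbf e_j=(v_j,v_{j+1})$, $q_j=Q(v_j)$, and $h_1(x_1,\dots,x_\ell)=\sum_{j}x_j$, $h_2(x_1,\dots,x_\ell)=\sum_{1\le j\le l\le \ell}x_jx_l$. In particular, if the periodic graph $\mathcal G$ is bipartite, then $\mathcal P_{n+1}^{\mathrm m}=\varnothing$ and $\mathcal I^{\mathrm m}_{n+2}(Q)=\sum_{\mathbf c\in\mathcal P_n^{\mathrm m}}h_2(q_1,\dots,q_n)$.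
   Context: Let $\Gamma$ be a lattice of rank $d$ in $\mathbb R^d$ with basis $\mathfrak a_1,\dots,\mathfrak a_d$ and fundamental cell $\Omega=\{\sum_s x_s\mathfrak a_s: x_s\in[0,1)\}$. A $\Gamma$-periodic graph $\mathcal G=(\mathcal V,\mathcal E)$ is a connected, locally finite graph embedded in $\mathbb R^d$, invariant under translation by $\Gamma$, with finite quotient; $\mathcal G$ has no loops, multiple edges are allowed. Edges are counted with both orientations ($\mathcal A$ oriented edges, $\bar{\mathbf e}$ inverse). The fundamental graph $\mathcal G_*=(\mathcal V_*,\mathcal A_* )=\mathcal G/\Gamma$ (may contain loops and multiple edges). Every vertex is uniquely $v=v_0+[v]$ with $v_0\in\Omega$, $[v]\in\Gamma$; for $\mathbf e=(u,v)$, $\tau(\mathbf e)=[v]_{\mathbb A}-[u]_{\mathbb A}\in\mathbb Z^d$ (coordinates in the basis), defined on $\mathcal A_*$ by $\Gamma$-invariance, with $\tau(\bar{\mathbf e})=-\tau(\mathbf e)$. A potential is $Q:\mathcal V_*\to\mathbb C$. A graph is bipartite if its vertices split into two parts with every edge joining different parts. A closed path $(\mathbf e_1,\dots,\mathbf e_\ell)$, $\mathbf e_j=(v_j,v_{j+1})$, $v_{\ell+1}=v_1$, has length $\ell$; prime if not an $r$-fold repetition of a closed path with $r\ge2$. A cycle is its class under cyclic permutations (prime if the path is prime), with length $\ell$ and index $\tau(\mathbf c)=\sum_j\tau(\mathbf e_j)$. The modified fundamental graph $\widetilde{\mathcal G}_*$ is $\mathcal G_*$ with one added loop $\mathbf e_v$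 at each $v$, index $0$. Weight $\omega(\mathbf c,Q)=\prod_j\omega(\mathbf e_j)$, $\omega(\mathbf e)=1$ for $\mathbf e\in\mathcal A_*$, $\omega(\mathbf e_v)=Q(v)$. $\mathcal P,\widetilde{\mathcal P}$: prime cycles of $\mathcal G_*$, $\widetilde{\mathcal G}_*$; $\mathcal P_\ell^{\mathrm m}$: prime cycles of $\mathcal G_*$ of length $\ell$ and index $\mathrm m$. $\mathcal I_N^{\mathrm m}(Q)=\sum\frac1r\omega^r(\mathbf c,Q)$ over $r\in\{1,\dots,N\}$, $\mathbf c\in\widetilde{\mathcal P}\setminus\mathcal P$ with $r|\mathbf c|=N$, $r\tau(\mathbf c)=\mathrm m$ (a Floquet spectral invariant). *)

theory Defs
  imports "HOL-Analysis.Finite_Cartesian_Product"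
begin

text \<open>Fundamental graph G_* = (V, A) with oriented arcs A (each with its inverse),
  source/target maps, and index tau : A -> Z^d (d = CARD('d)).
  Arcs of the modified graph are Inl e (e an arc of G_*) or Inr v (the added loop e_v).\<close>

type_synonym ('e,'v) marc = "'e + 'v"

fun arc_src :: "('e \<Rightarrow> 'v) \<Rightarrow> ('e,'v) marc \<Rightarrow> 'v" where
  "arc_src src (Inl e) = src e"
| "arc_src src (Inr v) = v"

fun arc_tgt :: "('e \<Rightarrow> 'v) \<Rightarrow> ('e,'v) marc \<Rightarrow> 'v" where
  "arc_tgt tgt (Inl e) = tgt e"
| "arc_tgt tgt (Inr v) = v"

fun arc_tau :: "('e \<Rightarrow> int ^ 'd) \<Rightarrow> ('e,'v) marc \<Rightarrow> int ^ 'd" where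
  "arc_tau tau (Inl e) = tau e"
| "arc_tau tau (Inr v) = 0"

fun arc_weight :: "('v \<Rightarrow> complex) \<Rightarrow> ('e,'v) marc \<Rightarrow> complex" where
  "arc_weight Q (Inl e) = 1"
| "arc_weight Q (Inr v) = Q v"

definition periodic_adj ::
  "'e set \<Rightarrow> ('e \<Rightarrow> 'v) \<Rightarrow> ('e \<Rightarrow> 'v) \<Rightarrow> ('e \<Rightarrow> int ^ 'd)
   \<Rightarrow> ('v \<times> (int ^ 'd)) \<Rightarrow> ('v \<times> (int ^ 'd)) \<Rightarrow> bool" where
  "periodic_adj A src tgt tau x y \<longleftrightarrow>
     (\<exists>e\<in>A. src e = fst x \<and> tgt e = fst y \<and> snd y = snd x + tau e)"

definition fundamental_graph ::
  "'v set \<Rightarrow> 'e set \<Rightarrow> ('e \<Rightarrow> 'v) \<Rightarrow> ('e \<Rightarrow> 'v) \<Rightarrow> ('e \<Rightarrow> 'e) \<Rightarrow> ('e \<Rightarrow> int ^ 'd) \<Rightarrow> bool" where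
  "fundamental_graph V A src tgt rv tau \<longleftrightarrow>
     finite V \<and> V \<noteq> {} \<and> finite A \<and>
     (\<forall>e\<in>A. src e \<in> V \<and> tgt e \<in> V \<and> rv e \<in> A \<and> rv (rv e) = e \<and> rv e \<noteq> e \<and>
             src (rv e) = tgt e \<and> tgt (rv e) = src e \<and> tau (rv e) = - tau e) \<and>
     \<comment> \<open>the periodic graph has no loops\<close>
     (\<forall>e\<in>A. \<not> (src e = tgt e \<and> tau e = 0)) \<and>
     \<comment> \<open>the periodic graph (vertex set V x Z^d) is connected\<close>
     (\<forall>x\<in>V \<times> UNIV. \<forall>y\<in>V \<times> UNIV.
        (x, y) \<in> {(a, b). periodic_adj A src tgt tau a b}\<^sup>*)"

definition periodic_bipartite ::
  "'v set \<Rightarrow> 'e set \<Rightarrow> ('e \<Rightarrow> 'v) \<Rightarrow> ('e \<Rightarrow> 'v) \<Rightarrow> ('e \<Rightarrow> int ^ 'd) \<Rightarrow> bool" where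
  "periodic_bipartite V A src tgt tau \<longleftrightarrow>
     (\<exists>f :: 'v \<times> (int ^ 'd) \<Rightarrow> bool. \<forall>x\<in>V \<times> UNIV. \<forall>y\<in>V \<times> UNIV.
        periodic_adj A src tgt tau x y \<longrightarrow> f x \<noteq> f y)"

definition closed_path ::
  "'v set \<Rightarrow> 'e set \<Rightarrow> ('e \<Rightarrow> 'v) \<Rightarrow> ('e \<Rightarrow> 'v) \<Rightarrow> ('e,'v) marc list \<Rightarrow> bool" where
  "closed_path V A src tgt p \<longleftrightarrow>
     p \<noteq> [] \<and> set p \<subseteq> Inl ` A \<union> Inr ` V \<and>
     (\<forall>j < length p. arc_tgt tgt (p ! j) = arc_src src (p ! ((j + 1) mod length p)))"

definition prime_path :: "'a list \<Rightarrow> bool" where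
  "prime_path p \<longleftrightarrow> \<not> (\<exists>q r. r \<ge> 2 \<and> p = concat (replicate r q))"

text \<open>A cycle is the class of a closed path under cyclic permutations.\<close>
definition cyc :: "'a list \<Rightarrow> 'a list set" where
  "cyc p = {rotate k p | k. True}"

definition rep :: "'a list set \<Rightarrow> 'a list" where
  "rep c = (SOME p. p \<in> c)"

definition prime_cycles_mod ::
  "'v set \<Rightarrow> 'e set \<Rightarrow> ('e \<Rightarrow> 'v) \<Rightarrow> ('e \<Rightarrow> 'v) \<Rightarrow> ('e,'v) marc list set set" where
  "prime_cycles_mod V A src tgt = {cyc p | p. closed_path V A src tgt p \<and> prime_path p}"

definition prime_cycles ::
  "'v set \<Rightarrow> 'e set \<Rightarrow> ('e \<Rightarrow> 'v) \<Rightarrow> ('e \<Rightarrow> 'v) \<Rightarrow> ('e,'v) marc list set set" where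
  "prime_cycles V A src tgt =
     {cyc p | p. closed_path V A src tgt p \<and> prime_path p \<and> set p \<subseteq> Inl ` A}"

definition cyc_len :: "'a list set \<Rightarrow> nat" where
  "cyc_len c = length (rep c)"

definition cyc_index :: "('e \<Rightarrow> int ^ 'd) \<Rightarrow> ('e,'v) marc list set \<Rightarrow> int ^ 'd" where
  "cyc_index tau c = sum_list (map (arc_tau tau) (rep c))"

definition cyc_weight :: "('v \<Rightarrow> complex) \<Rightarrow> ('e,'v) marc list set \<Rightarrow> complex" where
  "cyc_weight Q c = prod_list (map (arc_weight Q) (rep c))"

definition P_lm ::
  "'v set \<Rightarrow> 'e set \<Rightarrow> ('e \<Rightarrow> 'v) \<Rightarrow> ('e \<Rightarrow> 'v) \<Rightarrow> ('e \<Rightarrow> int ^ 'd) \<Rightarrow> nat \<Rightarrow> int ^ 'd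
   \<Rightarrow> ('e,'v) marc list set set" where
  "P_lm V A src tgt tau l m =
     {c \<in> prime_cycles V A src tgt. cyc_len c = l \<and> cyc_index tau c = m}"

definition I_inv ::
  "'v set \<Rightarrow> 'e set \<Rightarrow> ('e \<Rightarrow> 'v) \<Rightarrow> ('e \<Rightarrow> 'v) \<Rightarrow> ('e \<Rightarrow> int ^ 'd) \<Rightarrow> nat \<Rightarrow> int ^ 'd
   \<Rightarrow> ('v \<Rightarrow> complex) \<Rightarrow> complex" where
  "I_inv V A src tgt tau N m Q =
     (\<Sum>(c, r) \<in> {(c, r). c \<in> prime_cycles_mod V A src tgt - prime_cycles V A src tgt \<and>
                        r \<in> {1..N} \<and> r * cyc_len c = N \<and>
                        (\<chi> i. int r * cyc_index tau c $ i) = m}.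
        cyc_weight Q c ^ r / of_nat r)"

definition h1_cyc :: "('e \<Rightarrow> 'v) \<Rightarrow> ('v \<Rightarrow> complex) \<Rightarrow> ('e,'v) marc list set \<Rightarrow> complex" where
  "h1_cyc src Q c = (let q = map (\<lambda>a. Q (arc_src src a)) (rep c) in
     \<Sum>j<length q. q ! j)"

definition h2_cyc :: "('e \<Rightarrow> 'v) \<Rightarrow> ('v \<Rightarrow> complex) \<Rightarrow> ('e,'v) marc list set \<Rightarrow> complex" where
  "h2_cyc src Q c = (let q = map (\<lambda>a. Q (arc_src src a)) (rep c) in
     \<Sum>j<length q. \<Sum>l\<in>{j..<length q}. q ! j * q ! l)"

definition primitive_vec :: "int ^ 'd \<Rightarrow> bool" where
  "primitive_vec m \<longleftrightarrow> (\<forall>k::int. (\<forall>i. k dvd m $ i) \<longrightarrow> is_unit k)"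

definition shortest_len ::
  "'v set \<Rightarrow> 'e set \<Rightarrow> ('e \<Rightarrow> 'v) \<Rightarrow> ('e \<Rightarrow> 'v) \<Rightarrow> ('e \<Rightarrow> int ^ 'd) \<Rightarrow> int ^ 'd \<Rightarrow> nat" where
  "shortest_len V A src tgt tau m =
     (LEAST l. \<exists>p. closed_path V A src tgt p \<and> set p \<subseteq> Inl ` A \<and> length p = l \<and>
                   sum_list (map (arc_tau tau) p) = m)"

end

theory Submission
  imports Defs
begin

text \<open>
  Since \<open>m\<close> is primitive, only the repetition number \<open>r = 1\<close> contributes to
  \<open>I\<^sup>m\<^sub>N\<close>, and every closed path of index \<open>m\<close> is prime; so \<open>I\<^sup>m\<^sub>N\<close> is the total weight
  of the cycles of length \<open>N\<close> and index \<open>m\<close> of the modified graph that use at least one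
  added loop. Deleting the loops of such a cycle leaves a closed path of \<open>G\<^sub>*\<close> of index
  \<open>m\<close>, so at least \<open>n\<close> of its arcs are genuine: for \<open>N = n + 1\<close> it has exactly one loop, for
  \<open>N = n + 2\<close> one or two. A cycle with \<open>k\<close> loops has exactly \<open>k\<close> rotations beginning with a
  loop, and removing that leading loop is a bijection onto the closed paths with \<open>k - 1\<close>
  loops. Summing the weights over the rotations of the loop-free paths gives \<open>h\<^sub>1\<close>;
  doing it twice gives \<open>2 h\<^sub>2\<close>.

  In the bipartite case, translation by \<open>m\<close> preserves or swaps the two colour classes
  uniformly on the connected periodic graph, and a closed path of index \<open>m\<close> swaps them iff
  its length is odd. Hence all closed paths of \<open>G\<^sub>*\<close> of index \<open>m\<close> have lengths of the same
  parity, and length \<open>n + 1\<close> cannot occur.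
\<close>

lemma sum_list_map_rotate:
  fixes f :: "'a \<Rightarrow> 'b::comm_monoid_add"
  shows "sum_list (map f (rotate k xs)) = sum_list (map f xs)"
  by (metis append_take_drop_id map_append sum_list_append add.commute rotate_drop_take)

lemma prod_list_map_rotate:
  fixes f :: "'a \<Rightarrow> 'b::comm_monoid_mult"
  shows "prod_list (map f (rotate k xs)) = prod_list (map f xs)"
  by (metis append_take_drop_id map_append prod_list.append mult.commute rotate_drop_take)

lemma prime_path_nonempty: "prime_path p \<Longrightarrow> p \<noteq> []"
  unfolding prime_path_def by (metis concat_replicate_trivial le_refl)

lemma inj_on_rotate_prime_path:
  assumes "prime_path p"
  shows "inj_on (\<lambda>k. rotate k p) {..<length p}"
proof -
  have "rotate i p \<noteq> rotate j p" if ij: "i < j" "j < length p" for i j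
  proof
    assume eq: "rotate i p = rotate j p"
    define d where "d = j - i"
    have d: "0 < d" "d < length p" using ij by (auto simp: d_def)
    have "p = rotate (length p - i) (rotate i p)"
      using ij by (simp add: rotate_rotate)
    also have "\<dots> = rotate (length p + d) p"
      using ij by (simp add: eq rotate_rotate d_def)
    also have "\<dots> = rotate d p"
      by (subst rotate_conv_mod) (use d in simp)
    finally have "drop d p @ take d p = take d p @ drop d p"
      using d by (simp add: rotate_drop_take)
    then obtain a b q where a: "concat (replicate a q) = drop d p"
      and b: "concat (replicate b q) = take d p"
      using comm_append_are_replicate by blast
    have "drop d p \<noteq> []" "take d p \<noteq> []" using d by auto
    then have "a \<noteq> 0" "b \<noteq> 0" using a b by (metis concat.simps(1) replicate_0)+
    moreover have "p = concat (replicate (b + a) q)"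
      using a b by (simp add: replicate_add)
    ultimately show False using assms unfolding prime_path_def
      by (metis add_le_mono less_one not_less one_add_one)
  qed
  then show ?thesis unfolding inj_on_def by (metis lessThan_iff nat_neq_iff)
qed

lemma cyc_eq_rotations:
  assumes "p \<noteq> []"
  shows "cyc p = (\<lambda>k. rotate k p) ` {..<length p}"
proof -
  have "rotate k p \<in> (\<lambda>k. rotate k p) ` {..<length p}" for k
    using assms by (intro image_eqI[of _ _ "k mod length p"]) (auto simp: rotate_conv_mod[of k])
  then show ?thesis unfolding cyc_def by auto
qed

lemma finite_cyc: "finite (cyc p)"
  by (cases "p = []") (simp_all add: cyc_eq_rotations, simp add: cyc_def)

lemma sum_cyc_prime_path:
  "prime_path p \<Longrightarrow> (\<Sum>q\<in>cyc p. g q) = (\<Sum>k<length p. g (rotate k p))"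
  by (simp add: cyc_eq_rotations prime_path_nonempty sum.reindex inj_on_rotate_prime_path)

lemma self_in_cyc: "p \<in> cyc p"
  unfolding cyc_def by (auto intro: exI[of _ 0])

lemma cyc_rotate: "cyc (rotate k p) = cyc p"
proof
  show "cyc (rotate k p) \<subseteq> cyc p" unfolding cyc_def by (auto simp: rotate_rotate)
  have "p = rotate (length p - k mod length p) (rotate k p)"
  proof (cases "p = []")
    case False
    then show ?thesis by (simp add: rotate_rotate rotate_conv_mod[of k p])
  qed simp
  then have "rotate j p \<in> cyc (rotate k p)" for j
    unfolding cyc_def by (metis (mono_tags, lifting) CollectI rotate_rotate)
  then show "cyc p \<subseteq> cyc (rotate k p)" unfolding cyc_def by blast
qed

lemma cyc_eq_if_mem: "q \<in> cyc p \<Longrightarrow> cyc q = cyc p"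
  by (auto simp: cyc_def[of p] cyc_rotate)

lemma rep_cyc_eq_rotate: "\<exists>k. rep (cyc p) = rotate k p"
proof -
  have "rep (cyc p) \<in> cyc p" unfolding rep_def by (rule someI[of "\<lambda>q. q \<in> cyc p", OF self_in_cyc])
  then show ?thesis unfolding cyc_def by blast
qed

lemma sum_cyc_image:
  assumes "finite W" and "\<And>p k. p \<in> W \<Longrightarrow> rotate k p \<in> W"
  shows "(\<Sum>c\<in>cyc ` W. \<Sum>q\<in>c. g q) = (\<Sum>q\<in>W. g q)"
proof -
  have "(\<Sum>c\<in>cyc ` W. \<Sum>q\<in>c. g q) = (\<Sum>q\<in>\<Union>(cyc ` W). g q)"
    using assms(1) by (subst sum.Union_disjoint) (auto simp: finite_cyc, (metis cyc_eq_if_mem)+)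
  also have "\<Union>(cyc ` W) = W"
    using assms(2) self_in_cyc by (fastforce simp: cyc_def)
  finally show ?thesis .
qed

lemma rotation_invariant_rep_cyc: "(\<And>k. f (rotate k p) = f p) \<Longrightarrow> f (rep (cyc p)) = f p"
  using rep_cyc_eq_rotate[of p] by auto

lemma cyc_len_cyc: "cyc_len (cyc p) = length p"
  unfolding cyc_len_def by (rule rotation_invariant_rep_cyc) simp

lemma cyc_index_cyc: "cyc_index tau (cyc p) = sum_list (map (arc_tau tau) p)"
  unfolding cyc_index_def by (rule rotation_invariant_rep_cyc) (rule sum_list_map_rotate)

lemma sum_cyc_hd:
  fixes f :: "'a \<Rightarrow> 'b::comm_monoid_add"
  assumes "prime_path p"
  shows "(\<Sum>q\<in>cyc p. f (hd q)) = sum_list (map f p)"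
proof -
  have "(\<Sum>q\<in>cyc p. f (hd q)) = (\<Sum>k<length p. f (p ! k))"
    using assms prime_path_nonempty[OF assms]
    by (simp add: sum_cyc_prime_path hd_rotate_conv_nth)
  also have "\<dots> = sum_list (map f p)"
    by (simp add: sum_list_sum_nth atLeast0LessThan)
  finally show ?thesis .
qed

lemma sum_cyc_if_hd:
  fixes F :: "'a list \<Rightarrow> 'b::comm_semiring_1"
  assumes "prime_path p" and "\<And>k. F (rotate k p) = F p"
  shows "(\<Sum>q\<in>cyc p. if P (hd q) then F q else 0) = of_nat (length (filter P p)) * F p"
proof -
  have "(\<Sum>q\<in>cyc p. if P (hd q) then F q else 0) = (\<Sum>q\<in>cyc p. (if P (hd q) then 1 else 0) * F p)"
    using assms(2) by (intro sum.cong) (auto simp: cyc_def)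
  also have "\<dots> = sum_list (map (\<lambda>a. if P a then 1 else 0) p) * F p"
    by (simp add: sum_distrib_right flip: sum_cyc_hd[OF assms(1)])
  also have "sum_list (map (\<lambda>a. if P a then 1 else 0) p) = (of_nat (length (filter P p)) :: 'b)"
    by (simp add: sum_list_map_filter'[symmetric] sum_list_triv)
  finally show ?thesis .
qed

lemma sum_ordered_pairs_double:
  fixes x :: "nat \<Rightarrow> 'a::comm_semiring_1"
  shows "2 * (\<Sum>j<L. \<Sum>l\<in>{j..<L}. x j * x l) = (\<Sum>j<L. x j * (x j + (\<Sum>i<L. x i)))"
proof (induction L)
  case (Suc L)
  have "(\<Sum>j<Suc L. \<Sum>l\<in>{j..<Suc L}. x j * x l)
      = (\<Sum>j<L. \<Sum>l\<in>{j..<L}. x j * x l) + (\<Sum>j<L. x j) * x L + x L * x L"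
    by (simp add: sum.distrib sum_distrib_right add.assoc)
  moreover have "(\<Sum>j<Suc L. x j * (x j + (\<Sum>i<Suc L. x i)))
      = (\<Sum>j<L. x j * (x j + (\<Sum>i<L. x i))) + (\<Sum>j<L. x j) * x L + x L * (x L + (\<Sum>i<L. x i) + x L)"
    by (simp add: algebra_simps sum.distrib sum_distrib_left sum_distrib_right)
  ultimately show ?case
    by (simp only: flip: Suc.IH) (simp add: algebra_simps mult_2 mult_2_right)
qed simp

lemma successively_Cons_filter:
  assumes "successively R (x # xs)"
    and "\<And>a y b. \<not> P y \<Longrightarrow> R a y \<Longrightarrow> R y b \<Longrightarrow> R a b"
  shows "successively R (x # filter P xs)"
  using assms(1)
proof (induction xs arbitrary: x)
  case (Cons y ys)
  show ?case
  proof (cases "P y")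
    case True
    then show ?thesis using Cons by (simp add: successively_Cons)
  next
    case False
    then have "successively R (x # ys)"
      using Cons.prems assms(2) by (cases ys) (auto simp: successively_Cons)
    then show ?thesis using Cons.IH False by simp
  qed
qed simp

lemma successively_filter:
  assumes "successively R xs"
    and "\<And>a y b. \<not> P y \<Longrightarrow> R a y \<Longrightarrow> R y b \<Longrightarrow> R a b"
  shows "successively R (filter P xs)"
  using assms(1)
proof (induction xs)
  case (Cons x xs)
  show ?case
  proof (cases "P x")
    case True
    then show ?thesis using successively_Cons_filter[OF Cons.prems assms(2)] by simp
  next
    case False
    then show ?thesis using Cons by (cases xs) auto
  qed
qed simp

lemma primitive_vec_nonzero: "primitive_vec m \<Longrightarrow> m \<noteq> 0"
proof
  assume "primitive_vec m" "m = 0"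
  then have "is_unit (2::int)" unfolding primitive_vec_def by simp
  then show False by simp
qed

lemma primitive_vec_multiple:
  assumes "primitive_vec m" and "(\<chi> i. int r * x $ i) = m"
  shows "r = 1"
proof -
  have "\<forall>i. int r dvd m $ i" using assms(2)[symmetric] by auto
  then show ?thesis using assms(1) unfolding primitive_vec_def by auto
qed

lemma prime_path_if_primitive_index:
  assumes "primitive_vec m" and "sum_list (map f p) = m"
  shows "prime_path p"
  unfolding prime_path_def
proof
  assume "\<exists>q r. 2 \<le> r \<and> p = concat (replicate r q)"
  then obtain q r where r: "2 \<le> r" and p: "p = concat (replicate r q)" by blast
  have "sum_list (map f p) $ i = int r * sum_list (map f q) $ i" for i
    unfolding p by (induction r) (simp_all add: algebra_simps)
  then have "(\<chi> i. int r * sum_list (map f q) $ i) = m"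
    using assms(2) by (simp add: vec_eq_iff)
  then show False using primitive_vec_multiple[OF assms(1)] r by fastforce
qed

locale periodic_graph =
  fixes V :: "'v set" and A :: "'e set" and src tgt :: "'e \<Rightarrow> 'v" and rv :: "'e \<Rightarrow> 'e"
    and tau :: "'e \<Rightarrow> int ^ 'd"
  assumes fundamental: "fundamental_graph V A src tgt rv tau"
begin

abbreviation closed :: "('e, 'v) marc list \<Rightarrow> bool" where
  "closed \<equiv> closed_path V A src tgt"

abbreviation marcs :: "('e, 'v) marc set" where
  "marcs \<equiv> Inl ` A \<union> Inr ` V"

abbreviation linked :: "('e, 'v) marc \<Rightarrow> ('e, 'v) marc \<Rightarrow> bool" where
  "linked a b \<equiv> arc_tgt tgt a = arc_src src b"

definition path_index :: "('e, 'v) marc list \<Rightarrow> int ^ 'd" where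
  "path_index p = sum_list (map (arc_tau tau) p)"

definition loop_count :: "('e, 'v) marc list \<Rightarrow> nat" where
  "loop_count p = length (filter (\<lambda>a. \<not> isl a) p)"

definition add_loop :: "('e, 'v) marc list \<Rightarrow> ('e, 'v) marc list" where
  "add_loop q = Inr (arc_src src (hd q)) # q"

lemma finite_V: "finite V" and finite_A: "finite A"
  and arc_ends_in_V: "e \<in> A \<Longrightarrow> src e \<in> V \<and> tgt e \<in> V"
  using fundamental unfolding fundamental_graph_def by auto

lemma closed_path_iff_successively:
  "closed p \<longleftrightarrow> p \<noteq> [] \<and> set p \<subseteq> marcs \<and> successively linked (p @ [hd p])"
proof (cases "p = []")
  case False
  have "(p @ [hd p]) ! Suc j = p ! ((j + 1) mod length p)" if "j < length p" for j
    using False that by (cases "Suc j = length p") (auto simp: nth_append hd_conv_nth)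
  then have "successively linked (p @ [hd p]) \<longleftrightarrow>
      (\<forall>j < length p. linked (p ! j) (p ! ((j + 1) mod length p)))"
    by (auto simp: successively_conv_nth nth_append)
  then show ?thesis unfolding closed_path_def by auto
qed (simp add: closed_path_def)

lemma closed_path_rotate1:
  assumes "closed (x # xs)"
  shows "closed (xs @ [x])"
proof (cases xs)
  case (Cons y ys)
  have "set (x # xs) \<subseteq> marcs" "successively linked (x # y # ys @ [x])"
    using assms unfolding Cons closed_path_iff_successively by simp_all
  then have "set (xs @ [x]) \<subseteq> marcs" "successively linked ((y # ys @ [x]) @ [y])"
    unfolding Cons by (auto simp del: append_Cons simp: successively_append_iff)
  then show ?thesis unfolding Cons closed_path_iff_successively by simp
qed (use assms in simp)

lemma closed_path_rotate: "closed p \<Longrightarrow> closed (rotate k p)"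
proof (induction k)
  case (Suc k)
  then obtain x xs where "rotate k p = x # xs"
    by (metis closed_path_iff_successively list.exhaust)
  then show ?case using Suc closed_path_rotate1 by simp
qed simp

lemma path_index_rotate: "path_index (rotate k p) = path_index p"
  unfolding path_index_def by (rule sum_list_map_rotate)

lemma loop_count_rotate: "loop_count (rotate k p) = loop_count p"
  unfolding loop_count_def
  by (metis append_take_drop_id filter_append length_append add.commute rotate_drop_take)

lemma loop_count_eq_0_iff: "set p \<subseteq> marcs \<Longrightarrow> loop_count p = 0 \<longleftrightarrow> set p \<subseteq> Inl ` A"
  unfolding loop_count_def by (force simp: filter_empty_conv)

lemma path_index_filter_isl: "path_index (filter isl p) = path_index p"
proof (induction p)
  case (Cons a p)
  then show ?case by (cases a) (auto simp: path_index_def)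
qed (simp add: path_index_def)

lemma closed_path_filter_isl:
  assumes "closed p" and "isl (hd p)"
  shows "closed (filter isl p)"
proof -
  have p: "p \<noteq> []" "set p \<subseteq> marcs" "successively linked (p @ [hd p])"
    using assms(1) closed_path_iff_successively by blast+
  have "linked a b" if "\<not> isl y" "linked a y" "linked y b" for a y b
    using that by (cases y) auto
  with p(3) have "successively linked (filter isl (p @ [hd p]))"
    by (rule successively_filter)
  moreover have "hd (filter isl p) = hd p" "filter isl p \<noteq> []"
    using p(1) assms(2) by (cases p; simp)+
  ultimately show ?thesis
    using p(2) assms(2) by (auto simp: closed_path_iff_successively)
qed

lemma arc_src_hd_in_V: "closed p \<Longrightarrow> arc_src src (hd p) \<in> V"
  unfolding closed_path_def using arc_ends_in_V by (cases "hd p") (auto dest!: hd_in_set)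

lemma closed_path_add_loop: "closed q \<Longrightarrow> closed (add_loop q)"
  using arc_src_hd_in_V[of q]
  by (auto simp: closed_path_iff_successively add_loop_def successively_Cons successively_append_iff)

lemma add_loop_simps:
  assumes "q \<noteq> []"
  shows "path_index (add_loop q) = path_index q" "loop_count (add_loop q) = Suc (loop_count q)"
    "length (add_loop q) = Suc (length q)" "\<not> isl (hd (add_loop q))" "tl (add_loop q) = q"
  unfolding add_loop_def path_index_def loop_count_def by simp_all

lemma closed_path_tl:
  assumes "closed p" and "\<not> isl (hd p)" and "2 \<le> length p"
  shows "closed (tl p)" and "add_loop (tl p) = p"
proof -
  obtain v r where p: "p = Inr v # r" and "r \<noteq> []"
    using assms by (cases p; cases "hd p") (auto simp: Suc_le_eq)
  moreover have "set p \<subseteq> marcs" "successively linked (p @ [hd p])"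
    using assms(1) closed_path_iff_successively by blast+
  ultimately show "closed (tl p)" "add_loop (tl p) = p"
    by (auto simp: closed_path_iff_successively add_loop_def successively_Cons successively_append_iff)
qed

lemma cyc_in_prime_cycles_iff:
  assumes "closed p" and "prime_path p"
  shows "cyc p \<in> prime_cycles V A src tgt \<longleftrightarrow> loop_count p = 0"
proof
  assume "cyc p \<in> prime_cycles V A src tgt"
  then obtain q where "cyc p = cyc q" and "set q \<subseteq> Inl ` A"
    unfolding prime_cycles_def by auto
  moreover have "p \<in> cyc q"
    using self_in_cyc[of p] \<open>cyc p = cyc q\<close> by simp
  ultimately have "set p \<subseteq> Inl ` A" by (auto simp: cyc_def)
  then show "loop_count p = 0" by (auto simp: loop_count_def filter_empty_conv)
next
  assume "loop_count p = 0"
  then have "set p \<subseteq> Inl ` A"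
    using assms(1) loop_count_eq_0_iff unfolding closed_path_def by blast
  then show "cyc p \<in> prime_cycles V A src tgt"
    using assms unfolding prime_cycles_def by blast
qed

definition two_colouring :: "('v \<times> (int ^ 'd) \<Rightarrow> bool) \<Rightarrow> bool" where
  "two_colouring f \<longleftrightarrow>
     (\<forall>x\<in>V \<times> UNIV. \<forall>y\<in>V \<times> UNIV. periodic_adj A src tgt tau x y \<longrightarrow> f x \<noteq> f y)"

lemma two_colouring_arc:
  assumes "two_colouring f" and "e \<in> A"
  shows "f (tgt e, z + tau e) \<longleftrightarrow> \<not> f (src e, z)"
proof -
  have "periodic_adj A src tgt tau (src e, z) (tgt e, z + tau e)"
    unfolding periodic_adj_def using assms(2) by auto
  then show ?thesis using assms arc_ends_in_V[OF assms(2)] unfolding two_colouring_def by fastforce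
qed

lemma two_colouring_along_path:
  assumes "two_colouring f" and "q \<noteq> []" and "set q \<subseteq> Inl ` A" and "successively linked q"
  shows "f (arc_tgt tgt (last q), z + path_index q) = f (arc_src src (hd q), z) \<longleftrightarrow> even (length q)"
  using assms(2-)
proof (induction q arbitrary: z)
  case (Cons a q)
  then obtain e where a: "a = Inl e" and e: "e \<in> A" by auto
  show ?case
  proof (cases "q = []")
    case True
    then show ?thesis using a two_colouring_arc[OF assms(1) e] by (simp add: path_index_def)
  next
    case False
    then have "tgt e = arc_src src (hd q)" "successively linked q"
      using Cons.prems a by (auto simp: successively_Cons)
    then show ?thesis
      using Cons.IH[of "z + tau e"] Cons.prems False a two_colouring_arc[OF assms(1) e, of z]
      by (auto simp: path_index_def add.assoc)
  qed
qed simp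

lemma two_colouring_closed_path:
  assumes "two_colouring f" and "closed q" and "set q \<subseteq> Inl ` A"
  shows "f (arc_src src (hd q), z + path_index q) = f (arc_src src (hd q), z) \<longleftrightarrow> even (length q)"
proof -
  have "q \<noteq> []" "successively linked (q @ [hd q])"
    using assms(2) closed_path_iff_successively by blast+
  then have "successively linked q" "linked (last q) (hd q)"
    by (auto simp: successively_append_iff)
  then show ?thesis using two_colouring_along_path[OF assms(1) \<open>q \<noteq> []\<close> assms(3)] by simp
qed

lemma two_colouring_translate:
  assumes "two_colouring f" and "(x, y) \<in> {(a, b). periodic_adj A src tgt tau a b}\<^sup>*"
  shows "f (fst x, snd x + s) = f x \<longleftrightarrow> f (fst y, snd y + s) = f y"
  using assms(2)
proof (induction rule: rtrancl_induct)
  case (step y y')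
  obtain u z u' z' where y: "y = (u, z)" and y': "y' = (u', z')" by (cases y; cases y')
  then obtain e where e: "e \<in> A" "src e = u" "tgt e = u'" "z' = z + tau e"
    using step.hyps(2) by (auto simp: periodic_adj_def)
  then have "f y' \<longleftrightarrow> \<not> f y" "f (u', z' + s) \<longleftrightarrow> \<not> f (u, z + s)"
    using two_colouring_arc[OF assms(1) e(1), of z] two_colouring_arc[OF assms(1) e(1), of "z + s"]
    by (simp_all add: y y' algebra_simps)
  then show ?case using step.IH by (auto simp: y y')
qed simp

lemma bipartite_closed_path_parity:
  assumes "periodic_bipartite V A src tgt tau"
    and "closed p" "set p \<subseteq> Inl ` A" and "closed q" "set q \<subseteq> Inl ` A"
    and "path_index p = path_index q"
  shows "even (length p) \<longleftrightarrow> even (length q)"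
proof -
  obtain f where f: "two_colouring f"
    using assms(1) unfolding periodic_bipartite_def two_colouring_def by blast
  define u v where "u = arc_src src (hd p)" and "v = arc_src src (hd q)"
  have "((u, 0), (v, 0)) \<in> {(a, b). periodic_adj A src tgt tau a b}\<^sup>*"
    using fundamental arc_src_hd_in_V[OF assms(2)] arc_src_hd_in_V[OF assms(4)]
    unfolding fundamental_graph_def u_def v_def by blast
  then show ?thesis
    using two_colouring_translate[OF f, of _ _ "path_index p"]
      two_colouring_closed_path[OF f assms(2,3), of 0] two_colouring_closed_path[OF f assms(4,5), of 0]
    by (fastforce simp: u_def v_def assms(6))
qed

end

locale floquet_index = periodic_graph V A src tgt rv tau
  for V :: "'v set" and A :: "'e set" and src tgt :: "'e \<Rightarrow> 'v" and rv :: "'e \<Rightarrow> 'e"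
    and tau :: "'e \<Rightarrow> int ^ 'd" +
  fixes m :: "int ^ 'd" and Q :: "'v \<Rightarrow> complex"
  assumes primitive: "primitive_vec m"
begin

definition path_weight :: "('e, 'v) marc list \<Rightarrow> complex" where
  "path_weight p = prod_list (map (arc_weight Q) p)"

definition start_potential :: "('e, 'v) marc list \<Rightarrow> complex" where
  "start_potential p = Q (arc_src src (hd p))"

definition potential_sum :: "('e, 'v) marc list \<Rightarrow> complex" where
  "potential_sum p = sum_list (map (\<lambda>a. Q (arc_src src a)) p)"

definition closed_paths :: "nat \<Rightarrow> nat \<Rightarrow> ('e, 'v) marc list set" where
  "closed_paths N k = {p. closed p \<and> length p = N \<and> path_index p = m \<and> loop_count p = k}"

lemma prime_path_if_index: "path_index p = m \<Longrightarrow> prime_path p"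
  unfolding path_index_def by (rule prime_path_if_primitive_index[OF primitive])

lemma finite_closed_paths: "finite (closed_paths N k)"
proof (rule finite_subset)
  show "closed_paths N k \<subseteq> {p. set p \<subseteq> marcs \<and> length p = N}"
    unfolding closed_paths_def closed_path_def by auto
  show "finite {p. set p \<subseteq> marcs \<and> length p = N}"
    by (rule finite_lists_length_eq) (simp add: finite_V finite_A)
qed

lemma closed_paths_rotate: "p \<in> closed_paths N k \<Longrightarrow> rotate j p \<in> closed_paths N k"
  unfolding closed_paths_def by (simp add: closed_path_rotate path_index_rotate loop_count_rotate)

lemma closed_paths_not_Nil: "p \<in> closed_paths N k \<Longrightarrow> p \<noteq> []"
  unfolding closed_paths_def closed_path_def by simp

lemma sum_cycles_loop_headed:
  fixes F :: "('e, 'v) marc list \<Rightarrow> 'a::comm_semiring_1"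
  assumes "\<And>p j. p \<in> closed_paths N k \<Longrightarrow> F (rotate j p) = F p"
  shows "(\<Sum>c\<in>cyc ` closed_paths N k. of_nat k * F (rep c))
       = (\<Sum>p\<in>closed_paths N k. if \<not> isl (hd p) then F p else 0)"
proof -
  have "(\<Sum>q\<in>c. if \<not> isl (hd q) then F q else 0) = of_nat k * F (rep c)"
    if c_in: "c \<in> cyc ` closed_paths N k" for c
  proof -
    obtain p where p: "p \<in> closed_paths N k" and c: "c = cyc p" using c_in by blast
    define r where "r = rep c"
    obtain j where j: "r = rotate j p" using rep_cyc_eq_rotate unfolding r_def c by blast
    have r: "r \<in> closed_paths N k" "c = cyc r"
      using p closed_paths_rotate by (simp_all add: j c cyc_rotate)
    then have "prime_path r"
      using prime_path_if_index unfolding closed_paths_def by blast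
    then have "(\<Sum>q\<in>cyc r. if \<not> isl (hd q) then F q else 0) = of_nat (loop_count r) * F r"
      unfolding loop_count_def by (rule sum_cyc_if_hd) (use assms r in blast)
    with r show ?thesis unfolding r_def[symmetric] by (simp add: closed_paths_def)
  qed
  then show ?thesis
    by (simp add: sum_cyc_image[OF finite_closed_paths closed_paths_rotate, symmetric])
qed

lemma bij_betw_add_loop:
  assumes "1 \<le> N"
  shows "bij_betw add_loop (closed_paths N k) {p \<in> closed_paths (Suc N) (Suc k). \<not> isl (hd p)}"
proof (rule bij_betw_byWitness[where f' = tl])
  show "\<forall>q\<in>closed_paths N k. tl (add_loop q) = q"
    by (simp add: add_loop_def)
  show "add_loop ` closed_paths N k \<subseteq> {p \<in> closed_paths (Suc N) (Suc k). \<not> isl (hd p)}"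
    using add_loop_simps closed_paths_not_Nil closed_path_add_loop by (auto simp: closed_paths_def)
  have "add_loop (tl p) = p \<and> tl p \<in> closed_paths N k"
    if p: "p \<in> closed_paths (Suc N) (Suc k)" "\<not> isl (hd p)" for p
  proof -
    have "closed (tl p)" and "add_loop (tl p) = p"
      using closed_path_tl[of p] p assms by (auto simp: closed_paths_def)
    moreover have "tl p \<noteq> []" using p assms by (cases p) (auto simp: closed_paths_def)
    ultimately show ?thesis
      using p add_loop_simps[of "tl p"] unfolding closed_paths_def by auto
  qed
  then show "\<forall>p\<in>{p \<in> closed_paths (Suc N) (Suc k). \<not> isl (hd p)}. add_loop (tl p) = p"
    and "tl ` {p \<in> closed_paths (Suc N) (Suc k). \<not> isl (hd p)} \<subseteq> closed_paths N k"
    by auto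
qed

lemma sum_cycles_add_loop:
  fixes F :: "('e, 'v) marc list \<Rightarrow> 'a::comm_semiring_1"
  assumes "1 \<le> N" and "\<And>p j. p \<in> closed_paths (Suc N) (Suc k) \<Longrightarrow> F (rotate j p) = F p"
  shows "(\<Sum>c\<in>cyc ` closed_paths (Suc N) (Suc k). of_nat (Suc k) * F (rep c))
       = (\<Sum>q\<in>closed_paths N k. F (add_loop q))"
proof -
  have "(\<Sum>c\<in>cyc ` closed_paths (Suc N) (Suc k). of_nat (Suc k) * F (rep c))
      = (\<Sum>p\<in>{p \<in> closed_paths (Suc N) (Suc k). \<not> isl (hd p)}. F p)"
    using sum_cycles_loop_headed[OF assms(2)] by (simp add: sum.inter_filter finite_closed_paths del: of_nat_Suc)
  also have "\<dots> = (\<Sum>q\<in>closed_paths N k. F (add_loop q))"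
    by (rule sum.reindex_bij_betw[OF bij_betw_add_loop[OF assms(1)], symmetric])
  finally show ?thesis .
qed

lemma path_weight_rotate: "path_weight (rotate k p) = path_weight p"
  unfolding path_weight_def by (rule prod_list_map_rotate)

lemma potential_sum_rotate: "potential_sum (rotate k p) = potential_sum p"
  unfolding potential_sum_def by (rule sum_list_map_rotate)

lemma path_weight_add_loop: "path_weight (add_loop q) = start_potential q * path_weight q"
  and potential_sum_add_loop: "potential_sum (add_loop q) = start_potential q + potential_sum q"
  unfolding path_weight_def potential_sum_def start_potential_def add_loop_def by simp_all

lemma path_weight_eq_1: "loop_count p = 0 \<Longrightarrow> path_weight p = 1"
  unfolding loop_count_def path_weight_def
proof (induction p)
  case (Cons a p)
  then show ?case by (cases a) auto
qed simp

lemma cyc_weight_eq: "cyc_weight Q c = path_weight (rep c)"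
  unfolding cyc_weight_def path_weight_def ..

lemma h1_cyc_eq: "h1_cyc src Q c = potential_sum (rep c)"
  by (simp add: h1_cyc_def potential_sum_def sum_list_sum_nth atLeast0LessThan)

lemma sum_cyc_start_potential:
  "prime_path p \<Longrightarrow> (\<Sum>q\<in>cyc p. start_potential q) = potential_sum p"
  using sum_cyc_hd[of p "\<lambda>a. Q (arc_src src a)"]
  by (simp add: start_potential_def potential_sum_def)

lemma h2_cyc_cyc:
  assumes "prime_path p"
  shows "2 * h2_cyc src Q (cyc p)
       = (\<Sum>q\<in>cyc p. start_potential q * (start_potential q + potential_sum q))"
proof -
  obtain j where j: "rep (cyc p) = rotate j p" using rep_cyc_eq_rotate by blast
  define r where "r = rotate j p"
  define x where "x i = Q (arc_src src (r ! i))" for i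
  have "potential_sum p = potential_sum r"
    by (simp add: r_def potential_sum_rotate)
  then have S: "potential_sum p = (\<Sum>i<length r. x i)"
    by (simp add: potential_sum_def x_def sum_list_sum_nth atLeast0LessThan)
  have "(\<Sum>q\<in>cyc p. start_potential q * (start_potential q + potential_sum q))
      = (\<Sum>q\<in>cyc p. start_potential q * (start_potential q + potential_sum p))"
    by (rule sum.cong) (auto simp: cyc_def potential_sum_rotate)
  also have "\<dots> = (\<Sum>a\<leftarrow>r. Q (arc_src src a) * (Q (arc_src src a) + potential_sum p))"
    using sum_cyc_hd[OF assms, of "\<lambda>a. Q (arc_src src a) * (Q (arc_src src a) + potential_sum p)"]
    by (simp add: start_potential_def r_def sum_list_map_rotate)
  also have "\<dots> = (\<Sum>i<length r. x i * (x i + (\<Sum>i<length r. x i)))"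
    by (simp add: S x_def sum_list_sum_nth atLeast0LessThan)
  also have "\<dots> = 2 * h2_cyc src Q (cyc p)"
    unfolding sum_ordered_pairs_double[symmetric] h2_cyc_def Let_def j r_def[symmetric]
    by (simp add: x_def)
  finally show ?thesis ..
qed

lemma P_lm_eq: "P_lm V A src tgt tau N m = cyc ` closed_paths N 0"
proof (intro set_eqI iffI)
  fix c assume "c \<in> P_lm V A src tgt tau N m"
  then obtain p where "c = cyc p" "closed p" "prime_path p" "length p = N" "path_index p = m"
    unfolding P_lm_def prime_cycles_def by (auto simp: cyc_len_cyc cyc_index_cyc path_index_def)
  moreover from this have "loop_count p = 0"
    using cyc_in_prime_cycles_iff \<open>c \<in> P_lm V A src tgt tau N m\<close> unfolding P_lm_def by blast
  ultimately show "c \<in> cyc ` closed_paths N 0" unfolding closed_paths_def by blast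
next
  fix c assume "c \<in> cyc ` closed_paths N 0"
  then obtain p where p: "c = cyc p" "p \<in> closed_paths N 0" by blast
  then have "prime_path p" using prime_path_if_index unfolding closed_paths_def by blast
  then show "c \<in> P_lm V A src tgt tau N m"
    using p cyc_in_prime_cycles_iff unfolding P_lm_def closed_paths_def
    by (auto simp: cyc_len_cyc cyc_index_cyc path_index_def)
qed

lemma sum_P_lm_h1:
  "(\<Sum>c\<in>P_lm V A src tgt tau N m. h1_cyc src Q c) = (\<Sum>q\<in>closed_paths N 0. start_potential q)"
proof -
  have "(\<Sum>c\<in>P_lm V A src tgt tau N m. h1_cyc src Q c)
      = (\<Sum>c\<in>cyc ` closed_paths N 0. \<Sum>q\<in>c. start_potential q)"
    unfolding P_lm_eq h1_cyc_eq using sum_cyc_start_potential prime_path_if_index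
    by (intro sum.cong) (auto simp: closed_paths_def rotation_invariant_rep_cyc potential_sum_rotate)
  then show ?thesis by (simp add: sum_cyc_image finite_closed_paths closed_paths_rotate)
qed

lemma sum_P_lm_h2:
  "2 * (\<Sum>c\<in>P_lm V A src tgt tau N m. h2_cyc src Q c)
     = (\<Sum>q\<in>closed_paths N 0. start_potential q * (start_potential q + potential_sum q))"
proof -
  have "2 * (\<Sum>c\<in>P_lm V A src tgt tau N m. h2_cyc src Q c)
      = (\<Sum>c\<in>cyc ` closed_paths N 0. \<Sum>q\<in>c. start_potential q * (start_potential q + potential_sum q))"
    unfolding P_lm_eq sum_distrib_left using h2_cyc_cyc prime_path_if_index
    by (intro sum.cong) (auto simp: closed_paths_def)
  then show ?thesis by (simp add: sum_cyc_image finite_closed_paths closed_paths_rotate)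
qed

lemma sum_one_loop_cycles:
  assumes "1 \<le> N"
  shows "(\<Sum>c\<in>cyc ` closed_paths (Suc N) 1. cyc_weight Q c) = (\<Sum>q\<in>closed_paths N 0. start_potential q)"
  using sum_cycles_add_loop[OF assms, of 0 path_weight]
  by (simp add: cyc_weight_eq path_weight_rotate path_weight_add_loop path_weight_eq_1 closed_paths_def)

lemma sum_two_loop_cycles:
  assumes "1 \<le> N"
  shows "2 * (\<Sum>c\<in>cyc ` closed_paths (Suc (Suc N)) 2. cyc_weight Q c)
       = (\<Sum>q\<in>closed_paths N 0. start_potential q * (start_potential q + potential_sum q))"
proof -
  have "2 * (\<Sum>c\<in>cyc ` closed_paths (Suc (Suc N)) 2. cyc_weight Q c)
      = (\<Sum>q\<in>closed_paths (Suc N) 1. start_potential q * path_weight q)"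
    using sum_cycles_add_loop[of "Suc N" 1 path_weight] assms
    by (simp add: cyc_weight_eq path_weight_rotate path_weight_add_loop sum_distrib_left numeral_2_eq_2)
  also have "\<dots> = (\<Sum>c\<in>cyc ` closed_paths (Suc N) 1. \<Sum>q\<in>c. start_potential q * path_weight q)"
    by (simp add: sum_cyc_image finite_closed_paths closed_paths_rotate)
  also have "\<dots> = (\<Sum>c\<in>cyc ` closed_paths (Suc N) 1. path_weight (rep c) * potential_sum (rep c))"
  proof (rule sum.cong)
    fix c assume "c \<in> cyc ` closed_paths (Suc N) 1"
    then obtain p where c: "c = cyc p" and "prime_path p"
      using prime_path_if_index unfolding closed_paths_def by blast
    have "(\<Sum>q\<in>cyc p. start_potential q * path_weight q) = (\<Sum>q\<in>cyc p. start_potential q) * path_weight p"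
      by (auto simp: sum_distrib_right cyc_def path_weight_rotate intro: sum.cong)
    then show "(\<Sum>q\<in>c. start_potential q * path_weight q) = path_weight (rep c) * potential_sum (rep c)"
      by (simp add: c sum_cyc_start_potential[OF \<open>prime_path p\<close>] rotation_invariant_rep_cyc
          path_weight_rotate potential_sum_rotate)
  qed simp
  also have "\<dots> = (\<Sum>q\<in>closed_paths N 0. path_weight (add_loop q) * potential_sum (add_loop q))"
    using sum_cycles_add_loop[OF assms, of 0 "\<lambda>p. path_weight p * potential_sum p"]
    by (simp add: path_weight_rotate potential_sum_rotate)
  also have "\<dots> = (\<Sum>q\<in>closed_paths N 0. start_potential q * (start_potential q + potential_sum q))"
    by (simp add: path_weight_add_loop potential_sum_add_loop path_weight_eq_1 closed_paths_def)
  finally show ?thesis .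
qed

lemma cyc_loop_paths_eq:
  "cyc ` {p. closed p \<and> length p = N \<and> path_index p = m \<and> loop_count p \<noteq> 0}
     = {c \<in> prime_cycles_mod V A src tgt - prime_cycles V A src tgt.
          cyc_len c = N \<and> cyc_index tau c = m}"
proof (intro set_eqI iffI)
  fix c
  assume "c \<in> cyc ` {p. closed p \<and> length p = N \<and> path_index p = m \<and> loop_count p \<noteq> 0}"
  then obtain p where "c = cyc p" "closed p" "length p = N" "path_index p = m" "loop_count p \<noteq> 0"
    by blast
  moreover from this have "prime_path p" using prime_path_if_index by blast
  ultimately show "c \<in> {c \<in> prime_cycles_mod V A src tgt - prime_cycles V A src tgt.
                       cyc_len c = N \<and> cyc_index tau c = m}"
    using cyc_in_prime_cycles_iff unfolding prime_cycles_mod_def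
    by (auto simp: cyc_len_cyc cyc_index_cyc path_index_def)
next
  fix c
  assume "c \<in> {c \<in> prime_cycles_mod V A src tgt - prime_cycles V A src tgt.
                 cyc_len c = N \<and> cyc_index tau c = m}"
  then obtain p where "c = cyc p" "closed p" "prime_path p" "length p = N" "path_index p = m"
    "c \<notin> prime_cycles V A src tgt"
    unfolding prime_cycles_mod_def by (auto simp: cyc_len_cyc cyc_index_cyc path_index_def)
  then show "c \<in> cyc ` {p. closed p \<and> length p = N \<and> path_index p = m \<and> loop_count p \<noteq> 0}"
    using cyc_in_prime_cycles_iff by blast
qed

lemma I_inv_eq_sum_loop_cycles:
  assumes "1 \<le> N"
  shows "I_inv V A src tgt tau N m Q = (\<Sum>c\<in>cyc ` {p. closed p \<and> length p = N \<and>
           path_index p = m \<and> loop_count p \<noteq> 0}. cyc_weight Q c)"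
proof -
  let ?C = "{c \<in> prime_cycles_mod V A src tgt - prime_cycles V A src tgt.
              cyc_len c = N \<and> cyc_index tau c = m}"
  have "{(c, r). c \<in> prime_cycles_mod V A src tgt - prime_cycles V A src tgt \<and>
            r \<in> {1..N} \<and> r * cyc_len c = N \<and> (\<chi> i. int r * cyc_index tau c $ i) = m}
        = (\<lambda>c. (c, 1::nat)) ` ?C" (is "?pairs = _")
  proof (intro set_eqI iffI)
    fix x assume "x \<in> ?pairs"
    then obtain c r where "x = (c, r)" "c \<in> prime_cycles_mod V A src tgt - prime_cycles V A src tgt"
      "r * cyc_len c = N" and r: "(\<chi> i. int r * cyc_index tau c $ i) = m"
      by blast
    moreover have "r = 1" using primitive_vec_multiple[OF primitive r] .
    moreover from r this have "cyc_index tau c = m" by (simp add: vec_eq_iff)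
    ultimately show "x \<in> (\<lambda>c. (c, 1::nat)) ` ?C" by simp
  next
    fix x assume "x \<in> (\<lambda>c. (c, 1::nat)) ` ?C"
    then show "x \<in> ?pairs" using assms by (auto simp: vec_eq_iff)
  qed
  then show ?thesis
    unfolding I_inv_def cyc_loop_paths_eq by (simp add: sum.reindex inj_on_def)
qed

lemma disjoint_cyc_closed_paths:
  assumes "k \<noteq> k'"
  shows "cyc ` closed_paths N k \<inter> cyc ` closed_paths N k' = {}"
proof -
  have "loop_count p = loop_count q" if "cyc p = cyc q" for p q
  proof -
    have "q \<in> cyc p" using self_in_cyc[of q] that by simp
    then obtain j where "q = rotate j p" unfolding cyc_def by blast
    then show ?thesis by (simp add: loop_count_rotate)
  qed
  then show ?thesis using assms unfolding closed_paths_def by blast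
qed

context
  fixes n :: nat
  assumes index_realised: "\<exists>p. closed p \<and> set p \<subseteq> Inl ` A \<and> sum_list (map (arc_tau tau) p) = m"
    and n_eq: "n = shortest_len V A src tgt tau m"
begin

lemma shortest_len_le:
  "closed p \<Longrightarrow> set p \<subseteq> Inl ` A \<Longrightarrow> path_index p = m \<Longrightarrow> n \<le> length p"
  unfolding n_eq shortest_len_def path_index_def by (rule Least_le) blast

lemma closed_paths_shortest_len_nonempty: "closed_paths n 0 \<noteq> {}"
proof -
  have "\<exists>p. closed p \<and> set p \<subseteq> Inl ` A \<and> length p = n \<and> path_index p = m"
    unfolding n_eq shortest_len_def path_index_def by (rule LeastI_ex) (use index_realised in blast)
  then obtain p where "closed p" "set p \<subseteq> Inl ` A" "length p = n" "path_index p = m"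
    by blast
  then have "p \<in> closed_paths n 0"
    using loop_count_eq_0_iff unfolding closed_paths_def closed_path_def by blast
  then show ?thesis by blast
qed

lemma shortest_len_pos: "1 \<le> n"
  using closed_paths_shortest_len_nonempty closed_paths_not_Nil unfolding closed_paths_def
  by (auto simp: Suc_le_eq)

lemma shortest_len_add_loop_count_le:
  assumes "closed p" and "path_index p = m"
  shows "n + loop_count p \<le> length p"
proof -
  have "filter isl p \<noteq> []"
    using assms(2) primitive_vec_nonzero[OF primitive] path_index_filter_isl[of p]
    by (auto simp: path_index_def)
  then obtain i where i: "i < length p" "isl (p ! i)"
    by (auto simp: filter_empty_conv in_set_conv_nth)
  define q where "q = rotate i p"
  \<comment> \<open>\<open>q\<close> starts with an arc of \<open>G\<^sub>*\<close>, so deleting its loops keeps it closed\<close>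
  have "hd q = p ! i"
    using i(1) by (cases p) (simp_all add: q_def hd_rotate_conv_nth)
  with assms i have q: "closed q" "isl (hd q)" "path_index q = m" "length q = length p" "loop_count q = loop_count p"
    by (auto simp: q_def closed_path_rotate path_index_rotate loop_count_rotate)
  then have "closed (filter isl q)" "set (filter isl q) \<subseteq> Inl ` A" "path_index (filter isl q) = m"
    using closed_path_filter_isl path_index_filter_isl unfolding closed_path_def by auto
  then have "n \<le> length (filter isl q)" by (rule shortest_len_le)
  moreover have "length (filter isl q) + loop_count q = length q"
    unfolding loop_count_def by (rule sum_length_filter_compl)
  ultimately show ?thesis using q by simp
qed

lemma loop_paths_eq_UN_closed_paths:
  "{p. closed p \<and> length p = N \<and> path_index p = m \<and> loop_count p \<noteq> 0}
     = (\<Union>k\<in>{1..N - n}. closed_paths N k)"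
  using shortest_len_add_loop_count_le unfolding closed_paths_def by fastforce

lemma I_inv_eq_sum_by_loop_count:
  assumes "1 \<le> N"
  shows "I_inv V A src tgt tau N m Q = (\<Sum>k = 1..N - n. \<Sum>c\<in>cyc ` closed_paths N k. cyc_weight Q c)"
  unfolding I_inv_eq_sum_loop_cycles[OF assms] loop_paths_eq_UN_closed_paths image_UN
  by (rule sum.UNION_disjoint) (auto simp: finite_closed_paths dest: disjoint_cyc_closed_paths)

lemma I_inv_shortest_len_Suc:
  "I_inv V A src tgt tau (n + 1) m Q = (\<Sum>c\<in>P_lm V A src tgt tau n m. h1_cyc src Q c)"
  using I_inv_eq_sum_by_loop_count[of "n + 1"] sum_one_loop_cycles[OF shortest_len_pos]
  by (simp add: sum_P_lm_h1)

lemma I_inv_shortest_len_Suc_Suc: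
  "I_inv V A src tgt tau (n + 2) m Q =
     (\<Sum>c\<in>P_lm V A src tgt tau n m. h2_cyc src Q c)
     + (\<Sum>c\<in>P_lm V A src tgt tau (n + 1) m. h1_cyc src Q c)"
proof -
  have "I_inv V A src tgt tau (n + 2) m Q
      = (\<Sum>c\<in>cyc ` closed_paths (Suc (Suc n)) 1. cyc_weight Q c)
        + (\<Sum>c\<in>cyc ` closed_paths (Suc (Suc n)) 2. cyc_weight Q c)"
    using I_inv_eq_sum_by_loop_count[of "n + 2"] by (simp add: numeral_2_eq_2)
  also have "(\<Sum>c\<in>cyc ` closed_paths (Suc (Suc n)) 1. cyc_weight Q c)
      = (\<Sum>c\<in>P_lm V A src tgt tau (n + 1) m. h1_cyc src Q c)"
    using sum_one_loop_cycles[of "Suc n"] by (simp add: sum_P_lm_h1)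
  also have "(\<Sum>c\<in>cyc ` closed_paths (Suc (Suc n)) 2. cyc_weight Q c)
      = (\<Sum>c\<in>P_lm V A src tgt tau n m. h2_cyc src Q c)"
    using sum_two_loop_cycles[OF shortest_len_pos] sum_P_lm_h2[of n]
    by (metis mult_cancel_left zero_neq_numeral)
  finally show ?thesis by (simp add: add.commute)
qed

lemma P_lm_shortest_len_Suc_bipartite:
  assumes "periodic_bipartite V A src tgt tau"
  shows "P_lm V A src tgt tau (n + 1) m = {}"
proof (rule ccontr)
  assume "P_lm V A src tgt tau (n + 1) m \<noteq> {}"
  then obtain q where "q \<in> closed_paths (n + 1) 0" unfolding P_lm_eq by blast
  moreover obtain p where "p \<in> closed_paths n 0" using closed_paths_shortest_len_nonempty by blast
  ultimately show False
    using bipartite_closed_path_parity[OF assms, of p q] loop_count_eq_0_iff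
    unfolding closed_paths_def closed_path_def by auto
qed

end

end

theorem theorem2p11:
  fixes V :: "'v set" and A :: "'e set" and src tgt :: "'e \<Rightarrow> 'v" and rv :: "'e \<Rightarrow> 'e"
    and tau :: "'e \<Rightarrow> int ^ 'd" and m :: "int ^ 'd" and Q :: "'v \<Rightarrow> complex" and n :: nat
  assumes G: "fundamental_graph V A src tgt rv tau"
    and prim: "primitive_vec m"
    and ex: "\<exists>p. closed_path V A src tgt p \<and> set p \<subseteq> Inl ` A \<and> sum_list (map (arc_tau tau) p) = m"
    and n_def: "n = shortest_len V A src tgt tau m"
  shows "I_inv V A src tgt tau (n + 1) m Q = (\<Sum>c\<in>P_lm V A src tgt tau n m. h1_cyc src Q c)
     \<and> I_inv V A src tgt tau (n + 2) m Q =
         (\<Sum>c\<in>P_lm V A src tgt tau n m. h2_cyc src Q c)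
         + (\<Sum>c\<in>P_lm V A src tgt tau (n + 1) m. h1_cyc src Q c)
     \<and> (periodic_bipartite V A src tgt tau \<longrightarrow>
          P_lm V A src tgt tau (n + 1) m = {} \<and>
          I_inv V A src tgt tau (n + 2) m Q = (\<Sum>c\<in>P_lm V A src tgt tau n m. h2_cyc src Q c))"
proof -
  interpret floquet_index V A src tgt rv tau m Q
    using G prim by unfold_locales
  show ?thesis
    using I_inv_shortest_len_Suc[OF ex n_def] I_inv_shortest_len_Suc_Suc[OF ex n_def]
      P_lm_shortest_len_Suc_bipartite[OF ex n_def]
    by simp
qed

end
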